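(* As $N\to\infty$, $$\frac{1}{N}\sum_{n\le N} R_3(n)\sim \frac{1}{2}\log^2 N .$$
   Context: For a positive integer $n$, $R_3(n)$ denotes the number of ordered triples $(x,y,z)$ of positive integers with $n = xyz + x + y + z$. *)

theory Defs
  imports "HOL-Analysis.Analysis" "HOL-Library.Landau_Symbols"
begin

definition R3 :: "nat \<Rightarrow> nat" where
  "R3 n = card {(x, y, z). (x::nat) \<ge> 1 \<and> (y::nat) \<ge> 1 \<and> (z::nat) \<ge> 1 \<and> n = x * y * z + x + y + z}"

end

theory Submission
  imports Defs "HOL-Real_Asymp.Real_Asymp"
begin

text \<open>Counting \<open>z\<close> first, the sum of \<open>R\<^sub>3(n)\<close> over \<open>n \<le> N\<close> is the sum over \<open>x, y \<le> N\<close>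
  of \<open>\<lfloor>(N - x - y) / (xy + 1)\<rfloor>\<close>. For fixed \<open>x\<close> these terms vanish once \<open>xy > N\<close> and are
  \<open>N/(xy) + O(1)\<close> before, so the inner sum is \<open>(N/x) (log (N/x) + O(1))\<close>. Summing over \<open>x\<close>,
  the sum of \<open>log (N/x) / x\<close> is a Riemann sum for \<open>\<integral>\<^sub>1\<^sup>N log (N/t) / t dt = (log N)\<^sup>2 / 2\<close> with
  error \<open>O(log N)\<close>, and the \<open>O(1)\<close> terms contribute \<open>O(N log N)\<close> in total.\<close>

lemma harm_le_ln_plus_one:
  assumes "n \<ge> 1"
  shows "harm n \<le> ln (real n) + (1::real)"
proof -
  obtain m where n: "n = Suc m" using assms by (cases n) auto
  have "harm (Suc m) - ln (real (Suc m)) \<le> harm (Suc 0) - ln (real (Suc 0))"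
    using decseq_harm_diff_ln by (rule decseqD) simp
  then show ?thesis by (simp add: n harm_def)
qed

lemma harm_Suc_eq_one_plus_sum: "harm (Suc m) = 1 + (\<Sum>y=1..m. 1 / (real y + 1))"
  by (induction m) (simp_all add: harm_Suc harm_expand inverse_eq_divide add.commute)

lemma real_of_nat_div_gt:
  assumes "b > 0"
  shows "real a / real b - 1 < real (a div b)"
  using real_of_int_floor_gt_diff_one[of "real a / real b"] by (simp add: floor_divide_of_nat_eq)

text \<open>A discrete form of \<open>d/ds (- ln (t/s)\<^sup>2 / 2) = ln (t/s) / s\<close>: write \<open>(a\<^sup>2 - b\<^sup>2)/2\<close>
  as \<open>(a - b) (a + b)/2\<close>, where \<open>a - b = ln (1 + 1/k)\<close> lies between \<open>1/(k+1)\<close> and \<open>1/k\<close>.\<close>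
lemma ln_ratio_sq_diff_bounds:
  fixes t :: real
  assumes "k \<ge> 1" "real k + 1 \<le> t"
  defines "a \<equiv> ln (t / real k)" and "b \<equiv> ln (t / (real k + 1))"
  shows "b / (real k + 1) \<le> (a\<^sup>2 - b\<^sup>2) / 2" and "(a\<^sup>2 - b\<^sup>2) / 2 \<le> a / real k"
proof -
  have k: "real k \<ge> 1" using assms(1) by simp
  have diff: "a - b = ln (real k + 1) - ln (real k)"
    using k assms(2) by (simp add: a_def b_def ln_div)
  have "ln (real k) - ln (real k + 1) \<le> real k / (real k + 1) - 1"
    using ln_le_minus_one[of "real k / (real k + 1)"] k by (simp add: ln_div)
  also have "\<dots> = - (1 / (real k + 1))" using k by (simp add: field_simps)
  finally have lower: "1 / (real k + 1) \<le> a - b" using diff by linarith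
  have upper: "a - b \<le> 1 / real k"
    using diff ln_diff_le_inverse[OF k] by simp
  have "b \<ge> 0" using k assms(2) by (simp add: b_def)
  have "0 < 1 / (real k + 1)" using k by simp
  with lower have "b \<le> a" by linarith
  have sq: "(a\<^sup>2 - b\<^sup>2) / 2 = (a - b) * ((a + b) / 2)" by (simp add: power2_eq_square algebra_simps)
  have "b / (real k + 1) \<le> (a + b) / 2 / (real k + 1)"
    using \<open>b \<le> a\<close> k by (intro divide_right_mono) auto
  also have "\<dots> \<le> (a - b) * ((a + b) / 2)"
    using mult_right_mono[OF lower, of "(a + b) / 2"] \<open>b \<ge> 0\<close> \<open>b \<le> a\<close> by (simp add: mult.commute)
  finally show "b / (real k + 1) \<le> (a\<^sup>2 - b\<^sup>2) / 2" by (simp only: sq)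
  have "(a - b) * ((a + b) / 2) \<le> (a + b) / 2 / real k"
    using mult_right_mono[OF upper, of "(a + b) / 2"] \<open>b \<ge> 0\<close> \<open>b \<le> a\<close> by simp
  also have "\<dots> \<le> a / real k"
    using \<open>b \<le> a\<close> k by (intro divide_right_mono) auto
  finally show "(a\<^sup>2 - b\<^sup>2) / 2 \<le> a / real k" by (simp only: sq)
qed

lemma sum_ln_ratio_div_ge:
  fixes t :: real
  assumes "n \<ge> 1" "real n \<le> t"
  shows "(ln t ^ 2 - ln (t / real n) ^ 2) / 2 + ln (t / real n) / real n
           \<le> (\<Sum>k=1..n. ln (t / real k) / real k)"
  using assms
proof (induction n rule: nat_induct_at_least)
  case (Suc n)
  then have "real n + 1 \<le> t" by simp
  then have "real n \<le> t" by simp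
  note IH = Suc.IH[OF this]
  have "(\<Sum>k=1..Suc n. ln (t / real k) / real k)
      = (\<Sum>k=1..n. ln (t / real k) / real k) + ln (t / (real n + 1)) / (real n + 1)"
    by (simp add: add.commute)
  with IH \<open>real n + 1 \<le> t\<close> ln_ratio_sq_diff_bounds(2)[OF Suc.hyps \<open>real n + 1 \<le> t\<close>]
  show ?case by (simp only: of_nat_Suc add.commute[of 1] diff_divide_distrib)
qed simp

lemma sum_ln_ratio_div_le:
  fixes t :: real
  assumes "n \<ge> 1" "real n \<le> t"
  shows "(\<Sum>k=1..n. ln (t / real k) / real k) \<le> ln t + (ln t ^ 2 - ln (t / real n) ^ 2) / 2"
  using assms
proof (induction n rule: nat_induct_at_least)
  case (Suc n)
  then have "real n + 1 \<le> t" by simp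
  then have "real n \<le> t" by simp
  note IH = Suc.IH[OF this]
  have "(\<Sum>k=1..Suc n. ln (t / real k) / real k)
      = (\<Sum>k=1..n. ln (t / real k) / real k) + ln (t / (real n + 1)) / (real n + 1)"
    by (simp add: add.commute)
  with IH \<open>real n + 1 \<le> t\<close> ln_ratio_sq_diff_bounds(1)[OF Suc.hyps \<open>real n + 1 \<le> t\<close>]
  show ?case by (simp only: of_nat_Suc add.commute[of 1] diff_divide_distrib)
qed simp

lemma sum_ln_ratio_div_bounds:
  assumes "N \<ge> 1"
  shows "ln (real N) ^ 2 / 2 \<le> (\<Sum>k=1..N. ln (real N / real k) / real k)"
    and "(\<Sum>k=1..N. ln (real N / real k) / real k) \<le> ln (real N) + ln (real N) ^ 2 / 2"
  using sum_ln_ratio_div_ge[OF assms, of "real N"] sum_ln_ratio_div_le[OF assms, of "real N"] assms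
  by simp_all

lemma sum_weighted_ln_ratio_eq:
  "(\<Sum>x=1..N. real N / real x * (ln (real N / real x) + c))
     = real N * ((\<Sum>k=1..N. ln (real N / real k) / real k) + c * harm N)"
  by (simp add: harm_def sum.distrib sum_distrib_left distrib_left divide_inverse mult_ac)

text \<open>The number of \<open>z \<ge> 1\<close> with \<open>x*y*z + x + y + z \<le> N\<close>.\<close>
definition z_count :: "nat \<Rightarrow> nat \<Rightarrow> nat \<Rightarrow> nat" where
  "z_count N x y = (N - x - y) div (x*y + 1)"

lemma sum_R3_eq_sum_z_count:
  "(\<Sum>n\<in>{1..N}. R3 n) = (\<Sum>x=1..N. \<Sum>y=1..N. z_count N x y)"
proof -
  define s :: "nat \<times> nat \<times> nat \<Rightarrow> nat" where "s = (\<lambda>(x, y, z). x*y*z + x + y + z)"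
  define P where "P = (SIGMA x:{1..N}. SIGMA y:{1..N}. {1..z_count N x y})"
  have mem_P: "(x, y, z) \<in> P \<longleftrightarrow> x \<ge> 1 \<and> y \<ge> 1 \<and> z \<ge> 1 \<and> x*y*z + x + y + z \<le> N"
    for x y z
  proof -
    have "z \<le> z_count N x y \<longleftrightarrow> z * (x*y+1) \<le> N - x - y"
      unfolding z_count_def by (rule less_eq_div_iff_mult_less_eq) simp
    also have "z * (x*y+1) = x*y*z + z" by (simp add: algebra_simps)
    finally show ?thesis unfolding P_def by auto
  qed
  have "R3 n = card {p \<in> P. s p = n}" if "n \<in> {1..N}" for n
    unfolding R3_def using that by (intro arg_cong[where f = card]) (auto simp: mem_P s_def)
  then have "(\<Sum>n\<in>{1..N}. R3 n) = (\<Sum>n\<in>{1..N}. card {p \<in> P. s p = n})"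
    by simp
  also have "\<dots> = card P"
    unfolding card_eq_sum
  proof (rule sum.group)
    show "finite P" by (simp add: P_def)
    show "s ` P \<subseteq> {1..N}" by (auto simp: s_def mem_P)
  qed simp
  also have "\<dots> = (\<Sum>x=1..N. \<Sum>y=1..N. z_count N x y)"
    by (simp add: P_def)
  finally show ?thesis .
qed

lemma z_count_eq_0:
  assumes "N < x * y"
  shows "z_count N x y = 0"
proof -
  have "N - x - y \<le> N" by simp
  with assms have "N - x - y < x*y + 1" by linarith
  then show ?thesis by (simp add: z_count_def)
qed

lemma z_count_le:
  assumes "x \<ge> 1" "y \<ge> 1"
  shows "real (z_count N x y) \<le> real N / (real x * real y)"
proof -
  have "real (z_count N x y) \<le> real (N - x - y) / real (x*y + 1)"
    unfolding z_count_def by (rule of_nat_div_le_of_nat)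
  also have "\<dots> \<le> real N / real (x*y)"
    using assms by (intro frac_le) auto
  finally show ?thesis by simp
qed

lemma z_count_ge:
  assumes "x \<ge> 1" "y \<ge> 1"
  shows "real N / (real x * (real y + 1)) - 2 \<le> real (z_count N x y)"
proof -
  define X Y where "X = real x" and "Y = real y"
  have X: "X \<ge> 1" "Y \<ge> 1" using assms by (auto simp: X_def Y_def)
  have "real N / (X * (Y + 1)) \<le> real N / (X*Y + 1)"
    using X by (intro divide_left_mono mult_pos_pos) (auto simp: algebra_simps add_pos_pos)
  moreover have "(X + Y) / (X*Y + 1) \<le> 1"
    using mult_nonneg_nonneg[of "X - 1" "Y - 1"] X by (simp add: algebra_simps)
  moreover have "(real N - X - Y) / (X*Y + 1) = real N / (X*Y + 1) - (X + Y) / (X*Y + 1)"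
    by (simp add: diff_divide_distrib add_divide_distrib)
  ultimately have "real N / (X * (Y + 1)) - 2 \<le> (real N - X - Y) / (X*Y + 1) - 1"
    by linarith
  also have "\<dots> \<le> real (N - x - y) / real (x*y + 1) - 1"
  proof -
    have "real N - X - Y \<le> real (N - x - y)" unfolding X_def Y_def by linarith
    then have "(real N - X - Y) / (X*Y + 1) \<le> real (N - x - y) / (X*Y + 1)"
      using X by (intro divide_right_mono) auto
    then show ?thesis by (simp add: X_def Y_def add.commute)
  qed
  also have "\<dots> \<le> real (z_count N x y)"
    unfolding z_count_def by (intro less_imp_le real_of_nat_div_gt) simp
  finally show ?thesis by (simp add: X_def Y_def)
qed

lemma sum_z_count_truncate:
  assumes "x \<ge> 1"
  shows "(\<Sum>y=1..N. z_count N x y) = (\<Sum>y=1..N div x. z_count N x y)"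
proof (rule sum.mono_neutral_right)
  show "{1..N div x} \<subseteq> {1..N}" using assms div_le_dividend[of N x] by auto
  show "\<forall>y\<in>{1..N} - {1..N div x}. z_count N x y = 0"
  proof
    fix y assume "y \<in> {1..N} - {1..N div x}"
    then have "N div x < y" by auto
    then have "N < x*y" using assms by (simp add: div_less_iff_less_mult mult.commute)
    then show "z_count N x y = 0" by (rule z_count_eq_0)
  qed
qed simp

lemma sum_z_count_le:
  assumes "1 \<le> x" "x \<le> N"
  shows "real (\<Sum>y=1..N. z_count N x y) \<le> real N / real x * (ln (real N / real x) + 1)"
proof -
  define m where "m = N div x"
  have "m \<ge> 1" unfolding m_def using assms by (simp add: less_eq_div_iff_mult_less_eq)
  have m_le: "real m \<le> real N / real x" unfolding m_def by (rule of_nat_div_le_of_nat)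
  have "real (\<Sum>y=1..N. z_count N x y) = (\<Sum>y=1..m. real (z_count N x y))"
    by (simp only: sum_z_count_truncate[OF assms(1)] m_def of_nat_sum)
  also have "\<dots> \<le> (\<Sum>y=1..m. real N / real x * (1 / real y))"
    using assms(1) by (intro sum_mono order.trans[OF z_count_le]) auto
  also have "\<dots> = real N / real x * harm m"
    by (simp add: harm_def sum_distrib_left divide_inverse)
  also have "\<dots> \<le> real N / real x * (ln (real N / real x) + 1)"
  proof (rule mult_left_mono)
    have "harm m \<le> ln (real m) + (1::real)" using \<open>m \<ge> 1\<close> by (rule harm_le_ln_plus_one)
    also have "\<dots> \<le> ln (real N / real x) + 1"
      using \<open>m \<ge> 1\<close> m_le by simp
    finally show "harm m \<le> ln (real N / real x) + 1" .
  qed simp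
  finally show ?thesis .
qed

lemma sum_z_count_ge:
  assumes "1 \<le> x" "x \<le> N"
  shows "real N / real x * (ln (real N / real x) - 3) \<le> real (\<Sum>y=1..N. z_count N x y)"
proof -
  define m where "m = N div x"
  have m_le: "real m \<le> real N / real x" unfolding m_def by (rule of_nat_div_le_of_nat)
  have "N < m * x + x"
    using div_mult_mod_eq[of N x] mod_less_divisor[of x N] assms unfolding m_def by linarith
  then have "real N < real (m * x + x)" by (simp only: of_nat_less_iff)
  then have "real N / real x < real m + 1" using assms by (simp add: divide_less_eq algebra_simps)
  then have "ln (real N / real x) \<le> ln (real (Suc m) + 1)"
    using assms by (subst ln_le_cancel_iff) auto
  also have "\<dots> \<le> harm (Suc m)" by (rule ln_le_harm)
  finally have ln_le: "ln (real N / real x) \<le> harm (Suc m)" .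
  have "real N / real x * (ln (real N / real x) - 3)
      = real N / real x * (ln (real N / real x) - 1) - 2 * (real N / real x)"
    by (simp add: algebra_simps)
  also have "\<dots> \<le> real N / real x * (harm (Suc m) - 1) - 2 * real m"
    using ln_le m_le by (intro diff_mono mult_left_mono) auto
  also have "\<dots> = (\<Sum>y=1..m. real N / (real x * (real y + 1)) - 2)"
    by (simp add: harm_Suc_eq_one_plus_sum sum_subtractf sum_distrib_left)
  also have "\<dots> \<le> (\<Sum>y=1..m. real (z_count N x y))"
    using assms(1) by (intro sum_mono z_count_ge) auto
  also have "\<dots> = real (\<Sum>y=1..N. z_count N x y)"
    by (simp only: sum_z_count_truncate[OF assms(1)] m_def of_nat_sum)
  finally show ?thesis .
qed

lemma average_R3_bounds:
  assumes "N \<ge> 1"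
  defines "L \<equiv> ln (real N)"
  shows "(\<Sum>n\<in>{1..N}. real (R3 n)) / real N \<in> {L^2/2 - 3*L - 3 .. L^2/2 + 2*L + 1}"
proof -
  define T where "T = (\<Sum>k=1..N. ln (real N / real k) / real k)"
  have T: "L^2/2 \<le> T" "T \<le> L + L^2/2"
    using sum_ln_ratio_div_bounds[OF assms(1)] by (simp_all add: T_def L_def)
  have H: "0 \<le> (harm N :: real)" "harm N \<le> L + 1"
    using harm_nonneg harm_le_ln_plus_one[OF assms(1)] by (simp_all add: L_def)
  have S: "(\<Sum>n\<in>{1..N}. real (R3 n)) = (\<Sum>x=1..N. real (\<Sum>y=1..N. z_count N x y))"
    by (simp only: of_nat_sum[symmetric] sum_R3_eq_sum_z_count)
  have "real N * (L^2/2 - 3*L - 3) \<le> real N * (T + (-3) * harm N)"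
    using T H by (intro mult_left_mono) auto
  also have "\<dots> = (\<Sum>x=1..N. real N / real x * (ln (real N / real x) + (-3)))"
    by (simp only: sum_weighted_ln_ratio_eq T_def)
  also have "\<dots> \<le> (\<Sum>n\<in>{1..N}. real (R3 n))"
    unfolding S by (intro sum_mono order.trans[OF _ sum_z_count_ge]) auto
  finally have lower: "real N * (L^2/2 - 3*L - 3) \<le> (\<Sum>n\<in>{1..N}. real (R3 n))" .
  have "(\<Sum>n\<in>{1..N}. real (R3 n)) \<le> (\<Sum>x=1..N. real N / real x * (ln (real N / real x) + 1))"
    unfolding S by (intro sum_mono sum_z_count_le) auto
  also have "\<dots> = real N * (T + 1 * harm N)"
    by (simp only: sum_weighted_ln_ratio_eq T_def)
  also have "\<dots> \<le> real N * (L^2/2 + 2*L + 1)"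
    using T H by (intro mult_left_mono) auto
  finally have upper: "(\<Sum>n\<in>{1..N}. real (R3 n)) \<le> real N * (L^2/2 + 2*L + 1)" .
  from lower upper assms(1) show ?thesis
    by (simp add: pos_le_divide_eq pos_divide_le_eq mult.commute)
qed

theorem theorem1:
  shows "(\<lambda>N::nat. (\<Sum>n\<in>{1..N}. real (R3 n)) / real N)
           \<sim>[at_top] (\<lambda>N. (1/2) * (ln (real N))\<^sup>2)"
proof (rule asymp_equiv_sandwich_real)
  show "(\<lambda>N::nat. ln (real N)^2/2 - 3 * ln (real N) - 3) \<sim>[at_top] (\<lambda>N. (1/2) * (ln (real N))\<^sup>2)"
    by real_asymp
  show "(\<lambda>N::nat. ln (real N)^2/2 + 2 * ln (real N) + 1) \<sim>[at_top] (\<lambda>N. (1/2) * (ln (real N))\<^sup>2)"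
    by real_asymp
  show "\<forall>\<^sub>F N in at_top. (\<Sum>n\<in>{1..N}. real (R3 n)) / real N
          \<in> {ln (real N)^2/2 - 3 * ln (real N) - 3 .. ln (real N)^2/2 + 2 * ln (real N) + 1}"
    using eventually_ge_at_top[of 1] by eventually_elim (rule average_R3_bounds)
qed

end
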